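(* Let $I,J\subseteq\mathbb{R}$ be intervals, $\tilde J\subseteq\mathbb{R}$, let $t:I\times J\to\tilde J$ and $h:I\times J\to(0,\infty)$ be such that $(g\circ t)\cdot h$ is competitorblind for every bounded continuous $g:\mathbb{R}\to\mathbb{R}$. Then $t$ is not injective.
   Context: Two finite measures $\alpha,\beta$ on $\mathbb{R}^2$ are competitors if they have the same first marginal $\alpha_0$ and the same second marginal, and for disintegrations $(\alpha_x),(\beta_x)$ with respect to $\alpha_0$ one has $\int y\,\alpha_x(dy)=\int y\,\beta_x(dy)$ for $\alpha_0$-a.e. $x$. A function $f$ on a rectangle $A\times B$ is called competitorblind if $\int f\,d\alpha=\int f\,d\beta$ whenever $\alpha,\beta$ are competitors concentrated on $A\times B$. *)

theory Defs
  imports "HOL-Probability.Probability"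
begin

definition nondeg_interval :: "real set \<Rightarrow> bool" where
  "nondeg_interval I \<longleftrightarrow> is_interval I \<and> (\<exists>x y. x \<in> I \<and> y \<in> I \<and> x \<noteq> y)"

definition fin_borel_meas2 :: "(real \<times> real) measure \<Rightarrow> bool" where
  "fin_borel_meas2 \<alpha> \<longleftrightarrow> finite_measure \<alpha> \<and> sets \<alpha> = sets (borel :: (real \<times> real) measure)"

definition marg1 :: "(real \<times> real) measure \<Rightarrow> real measure" where
  "marg1 \<alpha> = distr \<alpha> borel fst"

definition marg2 :: "(real \<times> real) measure \<Rightarrow> real measure" where
  "marg2 \<alpha> = distr \<alpha> borel snd"

definition disintegration :: "(real \<times> real) measure \<Rightarrow> (real \<Rightarrow> real measure) \<Rightarrow> bool" where
  "disintegration \<alpha> K \<longleftrightarrow>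
     (\<forall>x. prob_space (K x) \<and> sets (K x) = sets (borel :: real measure)) \<and>
     (\<forall>B \<in> sets (borel :: real measure). (\<lambda>x. emeasure (K x) B) \<in> borel_measurable borel) \<and>
     (\<forall>A \<in> sets (borel :: real measure). \<forall>B \<in> sets (borel :: real measure).
        emeasure \<alpha> (A \<times> B) = (\<integral>\<^sup>+ x. emeasure (K x) B * indicator A x \<partial>(marg1 \<alpha>)))"

definition competitors :: "(real \<times> real) measure \<Rightarrow> (real \<times> real) measure \<Rightarrow> bool" where
  "competitors \<alpha> \<beta> \<longleftrightarrow>
     fin_borel_meas2 \<alpha> \<and> fin_borel_meas2 \<beta> \<and>
     marg1 \<alpha> = marg1 \<beta> \<and> marg2 \<alpha> = marg2 \<beta> \<and>
     (\<exists>K L. disintegration \<alpha> K \<and> disintegration \<beta> L \<and>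
        (AE x in marg1 \<alpha>. (\<integral> y. y \<partial>(K x)) = (\<integral> y. y \<partial>(L x))))"

definition concentrated_on :: "(real \<times> real) measure \<Rightarrow> (real \<times> real) set \<Rightarrow> bool" where
  "concentrated_on \<alpha> S \<longleftrightarrow> (AE p in \<alpha>. p \<in> S)"

definition competitorblind :: "(real \<times> real \<Rightarrow> real) \<Rightarrow> real set \<Rightarrow> real set \<Rightarrow> bool" where
  "competitorblind f A B \<longleftrightarrow>
     set_borel_measurable borel (A \<times> B) f \<and>
     (\<forall>\<alpha> \<beta>. competitors \<alpha> \<beta> \<and> concentrated_on \<alpha> (A \<times> B) \<and> concentrated_on \<beta> (A \<times> B)
        \<and> set_integrable \<alpha> (A \<times> B) f \<and> set_integrable \<beta> (A \<times> B) f
        \<longrightarrow> set_lebesgue_integral \<alpha> (A \<times> B) f = set_lebesgue_integral \<beta> (A \<times> B) f)"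

end

theory Submission
  imports Defs
begin

text \<open>
  Put half of the mass at \<open>x\<^sub>1\<close>, split evenly between heights \<open>y\<^sub>1, y\<^sub>2\<close>, and the other half
  at \<open>(x\<^sub>2, m)\<close> with \<open>m\<close> the midpoint; exchanging the roles of \<open>x\<^sub>1\<close> and \<open>x\<^sub>2\<close> keeps
  both marginals and all barycenters (they equal \<open>m\<close>), so the two measures are distinct
  competitors. If \<open>t\<close> were injective, then for every atom \<open>a\<close> a continuous bounded \<open>g\<close> could
  vanish at the \<open>t\<close>-values of all other atoms and be positive at \<open>t a\<close>; competitorblindness of
  \<open>(g \<circ> t) h\<close> then says that both measures give \<open>a\<close> the same mass, so they would coincide.
\<close>

text \<open>\<open>measure_pmf\<close> carries the discrete \<open>\<sigma>\<close>-algebra; the definitions require Borel measures.\<close>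
definition borel_pmf :: "'a::topological_space pmf \<Rightarrow> 'a measure" where
  "borel_pmf p = distr (measure_pmf p) borel id"

lemma sets_borel_pmf [simp, measurable_cong]: "sets (borel_pmf p) = sets borel"
  by (simp add: borel_pmf_def)

lemma prob_space_borel_pmf: "prob_space (borel_pmf p)"
  unfolding borel_pmf_def
  by (rule prob_space.prob_space_distr) (auto simp: prob_space_measure_pmf)

lemma emeasure_borel_pmf: "A \<in> sets borel \<Longrightarrow> emeasure (borel_pmf p) A = emeasure (measure_pmf p) A"
  unfolding borel_pmf_def by (subst emeasure_distr) auto

lemma nn_integral_borel_pmf:
  "f \<in> borel_measurable borel \<Longrightarrow> (\<integral>\<^sup>+x. f x \<partial>borel_pmf p) = (\<integral>\<^sup>+x. f x \<partial>measure_pmf p)"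
  unfolding borel_pmf_def by (subst nn_integral_distr) auto

lemma integral_borel_pmf:
  fixes f :: "_ \<Rightarrow> real"
  shows "f \<in> borel_measurable borel \<Longrightarrow> (\<integral>x. f x \<partial>borel_pmf p) = (\<integral>x. f x \<partial>measure_pmf p)"
  unfolding borel_pmf_def by (subst integral_distr) auto

lemma integral_borel_pmf_finite:
  fixes f :: "_ \<Rightarrow> real"
  assumes "finite (set_pmf p)" "f \<in> borel_measurable borel"
  shows "(\<integral>x. f x \<partial>borel_pmf p) = (\<Sum>x\<in>set_pmf p. pmf p x * f x)"
  using assms by (simp add: integral_borel_pmf integral_measure_pmf[of "set_pmf p"])

lemma integrable_borel_pmf_finite:
  fixes f :: "_ \<Rightarrow> real"
  assumes "finite (set_pmf p)" "f \<in> borel_measurable borel"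
  shows "integrable (borel_pmf p) f"
  using assms unfolding borel_pmf_def
  by (subst integrable_distr_eq) (auto intro: integrable_measure_pmf_finite)

lemma AE_borel_pmf:
  fixes p :: "'a::t1_space pmf"
  assumes "set_pmf p \<subseteq> S"
  shows "AE x in borel_pmf p. x \<in> S"
proof (rule AE_I)
  have "set_pmf p \<in> sets borel"
    by (rule sets.countable[OF borel_closed[OF closed_singleton] countable_set_pmf])
  then show N: "- set_pmf p \<in> sets (borel_pmf p)"
    by simp
  show "emeasure (borel_pmf p) (- set_pmf p) = 0"
    using N by (simp add: emeasure_borel_pmf measure_pmf.emeasure_eq_measure measure_pmf_zero_iff)
  show "{x \<in> space (borel_pmf p). x \<notin> S} \<subseteq> - set_pmf p"
    using assms by blast
qed

lemma fin_borel_meas2_borel_pmf: "fin_borel_meas2 (borel_pmf p)"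
  using prob_space_borel_pmf[of p] by (simp add: fin_borel_meas2_def prob_space_def)

lemma marg1_borel_pmf: "marg1 (borel_pmf p) = borel_pmf (map_pmf fst p)"
  unfolding marg1_def borel_pmf_def map_pmf_rep_eq
  by (subst distr_distr)
    (auto simp: distr_distr comp_def
      intro!: borel_measurable_continuous_onI continuous_on_fst continuous_on_id)

lemma marg2_borel_pmf: "marg2 (borel_pmf p) = borel_pmf (map_pmf snd p)"
  unfolding marg2_def borel_pmf_def map_pmf_rep_eq
  by (subst distr_distr)
    (auto simp: distr_distr comp_def
      intro!: borel_measurable_continuous_onI continuous_on_snd continuous_on_id)

definition joint_pmf :: "'a pmf \<Rightarrow> ('a \<Rightarrow> 'b pmf) \<Rightarrow> ('a \<times> 'b) pmf" where
  "joint_pmf X K = bind_pmf X (\<lambda>x. map_pmf (Pair x) (K x))"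

lemma map_fst_joint_pmf: "map_pmf fst (joint_pmf X K) = X"
  by (simp add: joint_pmf_def map_bind_pmf map_pmf_comp bind_return_pmf')

lemma map_snd_joint_pmf: "map_pmf snd (joint_pmf X K) = bind_pmf X K"
  by (simp add: joint_pmf_def map_bind_pmf map_pmf_comp)

lemma disintegration_joint_pmf:
  fixes X :: "real pmf" and K :: "real \<Rightarrow> real pmf"
  assumes K: "\<And>B. B \<in> sets borel \<Longrightarrow> (\<lambda>x. emeasure (K x) B) \<in> borel_measurable borel"
  shows "disintegration (borel_pmf (joint_pmf X K)) (\<lambda>x. borel_pmf (K x))"
  unfolding disintegration_def
proof (intro conjI ballI allI)
  fix B :: "real set"
  assume B: "B \<in> sets borel"
  then show "(\<lambda>x. emeasure (borel_pmf (K x)) B) \<in> borel_measurable borel"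
    by (simp add: emeasure_borel_pmf K)
  fix A :: "real set"
  assume A: "A \<in> sets borel"
  let ?P = "joint_pmf X K"
  have "A \<times> B \<in> sets (borel :: (real \<times> real) measure)"
    using A B by (simp add: borel_prod[symmetric])
  then have "emeasure (borel_pmf ?P) (A \<times> B) = (\<integral>\<^sup>+q. indicator (A \<times> B) q \<partial>measure_pmf ?P)"
    by (simp add: emeasure_borel_pmf)
  also have "\<dots> = (\<integral>\<^sup>+x. \<integral>\<^sup>+y. indicator A x * indicator B y \<partial>K x \<partial>X)"
    unfolding joint_pmf_def nn_integral_bind_pmf nn_integral_map_pmf
    by (intro nn_integral_cong) (auto split: split_indicator)
  also have "\<dots> = (\<integral>\<^sup>+x. emeasure (borel_pmf (K x)) B * indicator A x \<partial>X)"
    using B by (simp add: nn_integral_cmult emeasure_borel_pmf mult.commute)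
  also have "\<dots> = (\<integral>\<^sup>+x. emeasure (borel_pmf (K x)) B * indicator A x \<partial>marg1 (borel_pmf ?P))"
    using A K[OF B]
    by (simp add: marg1_borel_pmf map_fst_joint_pmf nn_integral_borel_pmf emeasure_borel_pmf B)
  finally show "emeasure (borel_pmf ?P) (A \<times> B)
      = (\<integral>\<^sup>+x. emeasure (borel_pmf (K x)) B * indicator A x \<partial>marg1 (borel_pmf ?P))" .
qed (auto intro: prob_space_borel_pmf)

lemma competitors_joint_pmf:
  fixes X :: "real pmf" and K L :: "real \<Rightarrow> real pmf"
  assumes "\<And>B. B \<in> sets borel \<Longrightarrow> (\<lambda>x. emeasure (K x) B) \<in> borel_measurable borel"
    and "\<And>B. B \<in> sets borel \<Longrightarrow> (\<lambda>x. emeasure (L x) B) \<in> borel_measurable borel"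
    and "bind_pmf X K = bind_pmf X L"
    and "\<And>x. x \<in> set_pmf X \<Longrightarrow> (\<integral>y. y \<partial>K x) = (\<integral>y. y \<partial>L x)"
  shows "competitors (borel_pmf (joint_pmf X K)) (borel_pmf (joint_pmf X L))"
  unfolding competitors_def
proof (intro conjI exI)
  show "disintegration (borel_pmf (joint_pmf X K)) (\<lambda>x. borel_pmf (K x))"
    by (rule disintegration_joint_pmf) (rule assms(1))
  show "disintegration (borel_pmf (joint_pmf X L)) (\<lambda>x. borel_pmf (L x))"
    by (rule disintegration_joint_pmf) (rule assms(2))
  show "AE x in marg1 (borel_pmf (joint_pmf X K)).
          (\<integral>y. y \<partial>borel_pmf (K x)) = (\<integral>y. y \<partial>borel_pmf (L x))"
    unfolding marg1_borel_pmf map_fst_joint_pmf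
    by (rule AE_mp[OF AE_borel_pmf[OF order_refl]]) (simp add: integral_borel_pmf assms(4))
qed (simp_all add: fin_borel_meas2_borel_pmf marg1_borel_pmf marg2_borel_pmf
       map_fst_joint_pmf map_snd_joint_pmf assms(3))

definition spread_kernel :: "real \<Rightarrow> real \<Rightarrow> real \<Rightarrow> real \<Rightarrow> real pmf" where
  "spread_kernel a y\<^sub>1 y\<^sub>2 x = (if x = a then pmf_of_set {y\<^sub>1, y\<^sub>2} else return_pmf ((y\<^sub>1 + y\<^sub>2) / 2))"

lemma borel_measurable_emeasure_spread_kernel:
  "(\<lambda>x. emeasure (spread_kernel a y\<^sub>1 y\<^sub>2 x) B) \<in> borel_measurable borel"
proof -
  have "(\<lambda>x. emeasure (spread_kernel a y\<^sub>1 y\<^sub>2 x) B)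
      = (\<lambda>x. if x = a then emeasure (pmf_of_set {y\<^sub>1, y\<^sub>2}) B else emeasure (return_pmf ((y\<^sub>1 + y\<^sub>2) / 2)) B)"
    by (auto simp: spread_kernel_def)
  then show ?thesis
    by (simp add: measurable_If)
qed

lemma barycenter_spread_kernel: "(\<integral>y. y \<partial>spread_kernel a y\<^sub>1 y\<^sub>2 x) = (y\<^sub>1 + y\<^sub>2) / 2"
  by (cases "y\<^sub>1 = y\<^sub>2") (auto simp: spread_kernel_def integral_pmf_of_set)

lemma bind_pmf_of_set_spread_kernel:
  "bind_pmf (pmf_of_set {x\<^sub>1, x\<^sub>2}) (spread_kernel x\<^sub>1 y\<^sub>1 y\<^sub>2)
     = bind_pmf (pmf_of_set {x\<^sub>1, x\<^sub>2}) (spread_kernel x\<^sub>2 y\<^sub>1 y\<^sub>2)"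
  by (rule pmf_eqI) (cases "x\<^sub>1 = x\<^sub>2"; simp add: pmf_bind_pmf_of_set spread_kernel_def)

lemma competitors_spread_kernel:
  "competitors (borel_pmf (joint_pmf (pmf_of_set {x\<^sub>1, x\<^sub>2}) (spread_kernel x\<^sub>1 y\<^sub>1 y\<^sub>2)))
               (borel_pmf (joint_pmf (pmf_of_set {x\<^sub>1, x\<^sub>2}) (spread_kernel x\<^sub>2 y\<^sub>1 y\<^sub>2)))"
  by (intro competitors_joint_pmf borel_measurable_emeasure_spread_kernel
      bind_pmf_of_set_spread_kernel) (simp add: barycenter_spread_kernel)

lemma competitorblind_sum_pmf:
  assumes f: "competitorblind f A B"
    and "competitors (borel_pmf p) (borel_pmf q)"
    and "finite (set_pmf p)" "set_pmf p \<subseteq> A \<times> B"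
    and "finite (set_pmf q)" "set_pmf q \<subseteq> A \<times> B"
  shows "(\<Sum>x\<in>set_pmf p. pmf p x * f x) = (\<Sum>x\<in>set_pmf q. pmf q x * f x)"
proof -
  have meas: "(\<lambda>x. indicator (A \<times> B) x * f x) \<in> borel_measurable borel"
    using f by (simp add: competitorblind_def set_borel_measurable_def)
  have set_integral_eq_sum: "set_lebesgue_integral (borel_pmf r) (A \<times> B) f = (\<Sum>x\<in>set_pmf r. pmf r x * f x)"
    if "finite (set_pmf r)" "set_pmf r \<subseteq> A \<times> B" for r
    using that meas
    by (auto simp: set_lebesgue_integral_def integral_borel_pmf_finite subset_iff intro!: sum.cong)
  have "set_lebesgue_integral (borel_pmf p) (A \<times> B) f = set_lebesgue_integral (borel_pmf q) (A \<times> B) f"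
    using f assms(2-) meas
    by (simp add: competitorblind_def concentrated_on_def AE_borel_pmf set_integrable_def
        integrable_borel_pmf_finite)
  with assms(3-) show ?thesis
    by (simp add: set_integral_eq_sum)
qed

lemma exists_bump_function:
  fixes S :: "'a::metric_space set"
  assumes "closed S" "a \<notin> S"
  shows "\<exists>g :: 'a \<Rightarrow> real. continuous_on UNIV g \<and> bounded (range g) \<and> g a > 0 \<and> (\<forall>s\<in>S. g s = 0)"
proof (cases "S = {}")
  case True
  then show ?thesis
    by (intro exI[of _ "\<lambda>_. 1"]) auto
next
  case False
  have "continuous_on UNIV (\<lambda>x. min 1 (infdist x S))"
    by (intro continuous_on_min continuous_on_const continuous_on_infdist continuous_on_id)
  moreover have "bounded (range (\<lambda>x. min 1 (infdist x S)))"
    by (rule boundedI[of _ 1]) (auto simp: infdist_nonneg)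
  moreover have "min 1 (infdist a S) > 0"
    using assms False by (simp add: infdist_pos_not_in_closed)
  ultimately show ?thesis
    by (intro exI[of _ "\<lambda>x. min 1 (infdist x S)"]) auto
qed

lemma sum_pmf_eq_single:
  assumes "finite (set_pmf p)" "\<And>x. x \<in> set_pmf p \<Longrightarrow> x \<noteq> a \<Longrightarrow> f x = 0"
  shows "(\<Sum>x\<in>set_pmf p. pmf p x * f x) = pmf p a * f a"
proof -
  have "(\<Sum>x\<in>set_pmf p. pmf p x * f x) = (\<Sum>x\<in>set_pmf p. if x = a then pmf p a * f a else 0)"
    using assms(2) by (intro sum.cong) auto
  then show ?thesis
    using assms(1) by (simp add: set_pmf_iff)
qed

lemma competitors_eq_if_inj_on:
  assumes inj: "inj_on t (A \<times> B)"
    and h: "\<forall>x \<in> A \<times> B. h x > 0"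
    and blind: "\<forall>g :: real \<Rightarrow> real. continuous_on UNIV g \<and> bounded (range g)
                  \<longrightarrow> competitorblind (\<lambda>x. g (t x) * h x) A B"
    and pq: "competitors (borel_pmf p) (borel_pmf q)"
    and fin: "finite (set_pmf p)" "finite (set_pmf q)"
    and support: "set_pmf p \<subseteq> A \<times> B" "set_pmf q \<subseteq> A \<times> B"
  shows "p = q"
proof (rule pmf_eqI)
  fix a
  show "pmf p a = pmf q a"
  proof (cases "a \<in> set_pmf p \<union> set_pmf q")
    case False
    then show ?thesis
      by (simp add: set_pmf_iff)
  next
    case True
    let ?S = "t ` (set_pmf p \<union> set_pmf q - {a})"
    have "closed ?S"
      using fin by (simp add: finite_imp_closed)
    moreover have "t a \<notin> ?S"
      using inj_on_image_mem_iff[OF inj, of a "set_pmf p \<union> set_pmf q - {a}"] support True by auto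
    ultimately have "\<exists>g :: real \<Rightarrow> real. continuous_on UNIV g \<and> bounded (range g) \<and> g (t a) > 0
        \<and> (\<forall>s\<in>?S. g s = 0)"
      by (rule exists_bump_function)
    then obtain g :: "real \<Rightarrow> real" where g: "continuous_on UNIV g" "bounded (range g)"
      "g (t a) > 0" "\<forall>s\<in>?S. g s = 0"
      by blast
    have "(\<Sum>x\<in>set_pmf p. pmf p x * (g (t x) * h x)) = (\<Sum>x\<in>set_pmf q. pmf q x * (g (t x) * h x))"
      using blind g(1,2) pq fin support by (intro competitorblind_sum_pmf) auto
    moreover have "g (t a) * h a > 0"
      using g(3) h support True by auto
    ultimately show ?thesis
      using g(4) fin by (auto simp: sum_pmf_eq_single[of _ a])
  qed
qed

theorem lemma4p7:
  fixes I J Jt :: "real set" and t h :: "real \<times> real \<Rightarrow> real"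
  assumes "nondeg_interval I" and "nondeg_interval J"
    and "t ` (I \<times> J) \<subseteq> Jt"
    and "\<forall>p \<in> I \<times> J. h p > 0"
    and "\<forall>g :: real \<Rightarrow> real. continuous_on UNIV g \<and> bounded (range g)
           \<longrightarrow> competitorblind (\<lambda>p. g (t p) * h p) I J"
  shows "\<not> inj_on t (I \<times> J)"
proof
  assume inj: "inj_on t (I \<times> J)"
  obtain x\<^sub>1 x\<^sub>2 where x: "x\<^sub>1 \<in> I" "x\<^sub>2 \<in> I" "x\<^sub>1 \<noteq> x\<^sub>2"
    using assms(1) unfolding nondeg_interval_def by blast
  obtain y\<^sub>1 y\<^sub>2 where y: "y\<^sub>1 \<in> J" "y\<^sub>2 \<in> J" "y\<^sub>1 \<noteq> y\<^sub>2"
    using assms(2) unfolding nondeg_interval_def by blast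
  define m where "m = (y\<^sub>1 + y\<^sub>2) / 2"
  have "convex J"
    using assms(2) by (simp add: nondeg_interval_def is_interval_convex_1)
  then have m: "m \<in> J" "m \<noteq> y\<^sub>1"
    using convexD[of J y\<^sub>1 y\<^sub>2 "1/2" "1/2"] y by (auto simp: m_def add_divide_distrib)
  define \<alpha> where "\<alpha> = joint_pmf (pmf_of_set {x\<^sub>1, x\<^sub>2}) (spread_kernel x\<^sub>1 y\<^sub>1 y\<^sub>2)"
  define \<beta> where "\<beta> = joint_pmf (pmf_of_set {x\<^sub>1, x\<^sub>2}) (spread_kernel x\<^sub>2 y\<^sub>1 y\<^sub>2)"
  have set_\<alpha>: "set_pmf \<alpha> = {(x\<^sub>1, y\<^sub>1), (x\<^sub>1, y\<^sub>2), (x\<^sub>2, m)}"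
    and set_\<beta>: "set_pmf \<beta> = {(x\<^sub>1, m), (x\<^sub>2, y\<^sub>1), (x\<^sub>2, y\<^sub>2)}"
    using x(3) by (auto simp: \<alpha>_def \<beta>_def joint_pmf_def spread_kernel_def m_def)
  have "competitors (borel_pmf \<alpha>) (borel_pmf \<beta>)"
    unfolding \<alpha>_def \<beta>_def by (rule competitors_spread_kernel)
  then have "\<alpha> = \<beta>"
    using inj assms(4,5) x y m
    by (intro competitors_eq_if_inj_on[of t I J h]) (auto simp: set_\<alpha> set_\<beta>)
  moreover have "(x\<^sub>1, y\<^sub>1) \<in> set_pmf \<alpha>" "(x\<^sub>1, y\<^sub>1) \<notin> set_pmf \<beta>"
    using x(3) m(2) by (auto simp: set_\<alpha> set_\<beta>)
  ultimately show False
    by simp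
qed

end
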